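(* In the setting below, the positivity region $W^+_{\mathrm{AdS}^d}(h'')$ of $h''$ in $\mathrm{AdS}^d$ satisfies: (a) $W^+_{\mathrm{AdS}^d}(h'')\subseteq\eta(V)$, and $\eta^{-1}(W^+_{\mathrm{AdS}^d}(h''))=W_V^+(h'')\setminus\{v\in V:\beta(v,v)=-1\}$, where $W_V^+(h'')=\{v\in V:v_{d-1}>|v_0|\}$. (b) $W^+_{\mathrm{AdS}^d}(h'')$ has exactly two connected components. (c) As causal manifolds, these connected components are not globally hyperbolic.
   Context: $V=\mathbb R^{1,d-1}$ with $\beta(v,w)=v_0w_0-v_1w_1-\dots-v_{d-1}w_{d-1}$ and open positive cone $V_+=\{v:v_0>\sqrt{v_1^2+\dots+v_{d-1}^2}\}$. $\mathbb R^{2,d}=\mathbb R\oplus V\oplus\mathbb R$ with basis $e_1,\dots,e_{d+2}$ (so $e_{j+2}$ corresponds to the $j$-th coordinate of $V$) and form $\tilde\beta((t,v,s),(t',v',s'))=tt'+\beta(v,v')-ss'$. $Q=\{[x]\in\mathbb P(\mathbb R^{2,d}):\tilde\beta(x,x)=0\}$, and $\eta:V\to Q$, $\eta(v)=[\tfrac{1-\beta(v,v)}2:v:-\tfrac{1+\beta(v,v)}2]$, an open dense embedding. $Q$ carries the unique $\mathrm{SO}_{2,d}(\mathbb R)_e$-invariant causal structure for which $\eta$ maps the constant cone field $\overline{V_+}$ on $V$ to it. $\mathrm{AdS}^d=\{x\in\operatorname{span}(e_1,\dots,e_{d+1}):x_1^2+x_2^2-x_3^2-\dots-x_{d+1}^2=1\}$,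 identified via $x\mapsto[x-e_{d+2}]$ with the open subset $\{[x]\in Q:x_{d+2}\ne0\}$ and carrying the induced causal structure. $h''\in\mathfrak{so}_{2,d}(\mathbb R)$ is defined by $h''e_2=e_{d+1}$, $h''e_{d+1}=e_2$, $h''e_j=0$ otherwise. Positivity region: $W_N^+(x)=\{n\in N:\frac d{dt}|_{t=0}\exp(tx).n\in C_n^\circ\}$ (for $V$, using the constant cones $\overline{V_+}$). A causal manifold $U$ is globally hyperbolic if for all $a,b\in U$ the set of points lying on future-directed causal curves in $U$ from $a$ to $b$ has compact closure in $U$. *)

theory Defs
  imports "HOL-Analysis.Analysis"
begin

text \<open>V = R^{1,d-1} is modelled as real^'n (CARD('n) = d), with two
distinct distinguished coordinates: i0 (the time coordinate v_0) and iL (the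
coordinate v_{d-1}). R^{2,d} = R (+) V (+) R is modelled as real \<times> (real^'n) \<times> real,
written (t, v, s). The hyperplane span(e_1,...,e_{d+1}) = {(t,v,0)} is modelled as
real \<times> (real^'n).\<close>

definition mbeta :: "'n::finite \<Rightarrow> real^'n \<Rightarrow> real^'n \<Rightarrow> real" where
  "mbeta i0 v w = v$i0 * w$i0 - (\<Sum>j\<in>UNIV - {i0}. v$j * w$j)"

definition Vplus :: "'n::finite \<Rightarrow> (real^'n) set" where
  "Vplus i0 = {v. v$i0 > sqrt (\<Sum>j\<in>UNIV - {i0}. (v$j)^2)}"

definition eta_rep :: "'n::finite \<Rightarrow> real^'n \<Rightarrow> real \<times> (real^'n) \<times> real" where
  "eta_rep i0 v = ((1 - mbeta i0 v v) / 2, v, - (1 + mbeta i0 v v) / 2)"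

definition proj_eq :: "real \<times> (real^'n) \<times> real \<Rightarrow> real \<times> (real^'n) \<times> real \<Rightarrow> bool" where
  "proj_eq y z \<longleftrightarrow> y \<noteq> 0 \<and> z \<noteq> 0 \<and> (\<exists>c. c \<noteq> 0 \<and> y = c *\<^sub>R z)"

text \<open>AdS^d as a subset of span(e_1..e_{d+1}) and its embedding x \<mapsto> x - e_{d+2}.\<close>
definition AdS :: "'n::finite \<Rightarrow> (real \<times> (real^'n)) set" where
  "AdS i0 = {(t, v). t^2 + mbeta i0 v v = 1}"

definition ads_emb :: "real \<times> (real^'n) \<Rightarrow> real \<times> (real^'n) \<times> real" where
  "ads_emb x = (fst x, snd x, -1)"

text \<open>exp(s h'') for h'' e_2 = e_{d+1}, h'' e_{d+1} = e_2, h'' e_j = 0 otherwise: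
a hyperbolic rotation in the (v_0, v_{d-1}) plane.\<close>
definition boost :: "'n::finite \<Rightarrow> 'n \<Rightarrow> real \<Rightarrow> real^'n \<Rightarrow> real^'n" where
  "boost i0 iL s v = (\<chi> j. if j = i0 then cosh s * v$i0 + sinh s * v$iL
                        else if j = iL then sinh s * v$i0 + cosh s * v$iL else v$j)"

definition expH :: "'n::finite \<Rightarrow> 'n \<Rightarrow> real \<Rightarrow> real \<times> (real^'n) \<times> real \<Rightarrow> real \<times> (real^'n) \<times> real" where
  "expH i0 iL s y = (fst y, boost i0 iL s (fst (snd y)), snd (snd y))"

definition flowAdS :: "'n::finite \<Rightarrow> 'n \<Rightarrow> real \<Rightarrow> real \<times> (real^'n) \<Rightarrow> real \<times> (real^'n)" where
  "flowAdS i0 iL s x = (THE y. y \<in> AdS i0 \<and> proj_eq (ads_emb y) (expH i0 iL s (ads_emb x)))"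

definition flowV :: "'n::finite \<Rightarrow> 'n \<Rightarrow> real \<Rightarrow> real^'n \<Rightarrow> real^'n" where
  "flowV i0 iL s v = (THE w. proj_eq (eta_rep i0 w) (expH i0 iL s (eta_rep i0 v)))"

text \<open>Causal structure on AdS^d induced from Q: at x = (t,v) the tangent space is
x^\<perp> (w.r.t. the form bA below, which is the restriction of the form of R^{2,d}),
the cone is the closed future cone of bA on it, time-oriented by the vector field
J x = (-v_0, t e_0) (the generator of the rotation in the e_1,e_2 plane).\<close>
definition bA :: "'n::finite \<Rightarrow> real \<times> (real^'n) \<Rightarrow> real \<times> (real^'n) \<Rightarrow> real" where
  "bA i0 x y = fst x * fst y + mbeta i0 (snd x) (snd y)"

definition tanAdS :: "'n::finite \<Rightarrow> real \<times> (real^'n) \<Rightarrow> (real \<times> (real^'n)) set" where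
  "tanAdS i0 x = {z. bA i0 x z = 0}"

definition Jvec :: "'n::finite \<Rightarrow> real \<times> (real^'n) \<Rightarrow> real \<times> (real^'n)" where
  "Jvec i0 x = (- (snd x)$i0, \<chi> j. if j = i0 then fst x else 0)"

definition ads_cone :: "'n::finite \<Rightarrow> real \<times> (real^'n) \<Rightarrow> (real \<times> (real^'n)) set" where
  "ads_cone i0 x = {z \<in> tanAdS i0 x. bA i0 z z \<ge> 0 \<and> bA i0 z (Jvec i0 x) \<ge> 0}"

definition ads_cone_int :: "'n::finite \<Rightarrow> real \<times> (real^'n) \<Rightarrow> (real \<times> (real^'n)) set" where
  "ads_cone_int i0 x = {z \<in> tanAdS i0 x. bA i0 z z > 0 \<and> bA i0 z (Jvec i0 x) > 0}"

definition posAdS :: "'n::finite \<Rightarrow> 'n \<Rightarrow> (real \<times> (real^'n)) set" where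
  "posAdS i0 iL = {n \<in> AdS i0. \<exists>w. ((\<lambda>s. flowAdS i0 iL s n) has_vector_derivative w) (at 0)
                                    \<and> w \<in> ads_cone_int i0 n}"

definition posV :: "'n::finite \<Rightarrow> 'n \<Rightarrow> (real^'n) set" where
  "posV i0 iL = {v. \<exists>w. ((\<lambda>s. flowV i0 iL s v) has_vector_derivative w) (at 0) \<and> w \<in> Vplus i0}"

definition causal_curve :: "'n::finite \<Rightarrow> (real \<times> (real^'n)) set \<Rightarrow> (real \<Rightarrow> real \<times> (real^'n))
    \<Rightarrow> real \<times> (real^'n) \<Rightarrow> real \<times> (real^'n) \<Rightarrow> bool" where
  "causal_curve i0 U \<gamma> a b \<longleftrightarrow> \<gamma> piecewise_C1_differentiable_on {0..1} \<and>
     \<gamma> 0 = a \<and> \<gamma> 1 = b \<and> \<gamma> ` {0..1} \<subseteq> U \<and>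
     (\<forall>t\<in>{0..1}. \<forall>w. (\<gamma> has_vector_derivative w) (at t within {0..1}) \<longrightarrow> w \<in> ads_cone i0 (\<gamma> t))"

definition glob_hyp :: "'n::finite \<Rightarrow> (real \<times> (real^'n)) set \<Rightarrow> bool" where
  "glob_hyp i0 U \<longleftrightarrow> (\<forall>a\<in>U. \<forall>b\<in>U.
     compact (U \<inter> closure {\<gamma> t | \<gamma> t. causal_curve i0 U \<gamma> a b \<and> t \<in> {0..1}}))"

end

theory Submission
  imports Defs "HOL-Real_Asymp.Real_Asymp"
begin

(* exp(s h'') acts on V and on AdS^d as the boost of the (v_0, v_{d-1})-plane, with generator
   v |-> (v_{d-1}, 0, ..., 0, v_0). Testing where this generator is timelike and future directed
   gives W_V^+ = {|v_0| < v_{d-1}} and W_AdS^+ = {(t, v) in AdS : |v_0| < |v_{d-1}|, t v_{d-1} > 0}.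
   On W_AdS^+ we have beta(v,v) < 0, hence t^2 > 1, and eta is inverted by (t, u) |-> u / (1 + t).
   The sign of t splits W_AdS^+ into the graphs t = +-sqrt(1 - beta(v,v)) over the convex wedge
   |v_0| < v_{d-1}, so it has exactly two components, exchanged by x |-> -x.
   For (c), in conformal coordinates (theta, delta) on the AdS^2 slice spanned by e_1, e_2, e_{d+1}
   the curves t |-> (t - 1/2, delta t) are causal as soon as |delta'| <= 1. Keeping the endpoints
   delta 0 = delta 1 = 1/4 fixed and letting delta (1/2) tend to 0 drives points of a single causal
   diamond to the conformal boundary, so its closure is not compact. *)

lemma mbeta_split:
  fixes i0 iL :: "'n::finite"
  assumes "i0 \<noteq> iL"
  shows "mbeta i0 v w = v$i0 * w$i0 - v$iL * w$iL - (\<Sum>j\<in>UNIV - {i0, iL}. v$j * w$j)"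
proof -
  have "UNIV - {i0} = insert iL (UNIV - {i0, iL})"
    using assms by auto
  then show ?thesis
    unfolding mbeta_def by simp
qed

lemma mbeta_scaleR: "mbeta i0 (a *\<^sub>R v) (b *\<^sub>R w) = a * b * mbeta i0 v w"
  unfolding mbeta_def by (simp add: sum_distrib_left algebra_simps)

lemma mbeta_self_le:
  fixes i0 iL :: "'n::finite"
  assumes "i0 \<noteq> iL"
  shows "mbeta i0 v v \<le> (v$i0)\<^sup>2 - (v$iL)\<^sup>2"
proof -
  have "0 \<le> (\<Sum>j\<in>UNIV - {i0, iL}. v$j * v$j)"
    by (intro sum_nonneg) simp
  then show ?thesis
    by (simp add: mbeta_split[OF assms] power2_eq_square)
qed

lemma mbeta_self_neg:
  fixes i0 iL :: "'n::finite"
  assumes "i0 \<noteq> iL" and "\<bar>v$i0\<bar> < \<bar>v$iL\<bar>"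
  shows "mbeta i0 v v < 0"
  using mbeta_self_le[OF assms(1), of v] assms(2) abs_le_square_iff[of "v$iL" "v$i0"] by linarith

lemma axis_pair_nth:
  fixes i0 iL :: "'n::finite"
  assumes "i0 \<noteq> iL"
  shows "(a *\<^sub>R axis i0 1 + b *\<^sub>R axis iL 1 :: real^'n) $ i0 = a"
    and "(a *\<^sub>R axis i0 1 + b *\<^sub>R axis iL 1 :: real^'n) $ iL = b"
  using assms by (auto simp: axis_def)

lemma mbeta_axis_pair:
  fixes i0 iL :: "'n::finite"
  assumes "i0 \<noteq> iL"
  shows "mbeta i0 (a *\<^sub>R axis i0 1 + b *\<^sub>R axis iL 1) (c *\<^sub>R axis i0 1 + d *\<^sub>R axis iL 1)
           = a * c - b * d"
proof -
  have "(\<Sum>j\<in>UNIV - {i0, iL}. (a *\<^sub>R axis i0 1 + b *\<^sub>R axis iL 1) $ j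
           * (c *\<^sub>R axis i0 1 + d *\<^sub>R axis iL 1 :: real^'n) $ j) = 0"
    by (intro sum.neutral) (auto simp: axis_def)
  then show ?thesis
    using assms by (simp add: mbeta_split[OF assms] axis_def)
qed

lemma mbeta_boost:
  fixes i0 iL :: "'n::finite"
  assumes "i0 \<noteq> iL"
  shows "mbeta i0 (boost i0 iL s v) (boost i0 iL s v) = mbeta i0 v v"
proof -
  have "(cosh s * a + sinh s * b)\<^sup>2 - (sinh s * a + cosh s * b)\<^sup>2
          = ((cosh s)\<^sup>2 - (sinh s)\<^sup>2) * (a\<^sup>2 - b\<^sup>2)" for a b
    by (simp add: algebra_simps power2_eq_square)
  then have hyperbolic_rotation: "(cosh s * a + sinh s * b)\<^sup>2 - (sinh s * a + cosh s * b)\<^sup>2 = a\<^sup>2 - b\<^sup>2"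
    for a b by (simp add: cosh_square_eq)
  have "(\<Sum>j\<in>UNIV - {i0, iL}. boost i0 iL s v $ j * boost i0 iL s v $ j)
          = (\<Sum>j\<in>UNIV - {i0, iL}. v$j * v$j)"
    by (rule sum.cong) (auto simp: boost_def)
  with assms show ?thesis
    using hyperbolic_rotation[of "v$i0" "v$iL"]
    by (simp add: mbeta_split[OF assms] boost_def power2_eq_square)
qed

lemma flowAdS_eq_boost:
  fixes i0 iL :: "'n::finite"
  assumes "i0 \<noteq> iL" and "x \<in> AdS i0"
  shows "flowAdS i0 iL s x = (fst x, boost i0 iL s (snd x))"
  unfolding flowAdS_def
proof (rule the_equality)
  show "(fst x, boost i0 iL s (snd x)) \<in> AdS i0
      \<and> proj_eq (ads_emb (fst x, boost i0 iL s (snd x))) (expH i0 iL s (ads_emb x))"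
    using assms mbeta_boost[OF assms(1)]
    by (auto simp: AdS_def proj_eq_def ads_emb_def expH_def case_prod_beta zero_prod_def
             intro!: exI[of _ 1])
next
  fix y
  assume "y \<in> AdS i0 \<and> proj_eq (ads_emb y) (expH i0 iL s (ads_emb x))"
  then obtain c where "ads_emb y = c *\<^sub>R expH i0 iL s (ads_emb x)"
    by (auto simp: proj_eq_def)
  then show "y = (fst x, boost i0 iL s (snd x))"
    by (cases y) (auto simp: ads_emb_def expH_def)
qed

lemma flowV_eq_boost:
  fixes i0 iL :: "'n::finite"
  assumes "i0 \<noteq> iL"
  shows "flowV i0 iL s v = boost i0 iL s v"
  unfolding flowV_def
proof (rule the_equality)
  show "proj_eq (eta_rep i0 (boost i0 iL s v)) (expH i0 iL s (eta_rep i0 v))"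
    using mbeta_boost[OF assms, of s v]
    by (auto simp: proj_eq_def eta_rep_def expH_def zero_prod_def intro!: exI[of _ 1])
next
  fix w
  assume "proj_eq (eta_rep i0 w) (expH i0 iL s (eta_rep i0 v))"
  then obtain c where c: "eta_rep i0 w = c *\<^sub>R expH i0 iL s (eta_rep i0 v)"
    by (auto simp: proj_eq_def)
  then have "c = 1"
    by (simp add: eta_rep_def expH_def field_simps)
  with c show "w = boost i0 iL s v"
    by (simp add: eta_rep_def expH_def)
qed

lemma boost_has_vector_derivative:
  fixes i0 iL :: "'n::finite"
  assumes "i0 \<noteq> iL"
  shows "((\<lambda>s. boost i0 iL s v) has_vector_derivative v$iL *\<^sub>R axis i0 1 + v$i0 *\<^sub>R axis iL 1) (at 0)"
proof -
  have "(\<lambda>s. boost i0 iL s v) = (\<lambda>s. v + ((cosh s - 1) * v$i0 + sinh s * v$iL) *\<^sub>R axis i0 1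
                                     + (sinh s * v$i0 + (cosh s - 1) * v$iL) *\<^sub>R axis iL 1)"
    using assms by (auto simp: boost_def vec_eq_iff axis_def algebra_simps)
  moreover have "((\<lambda>s. v + ((cosh s - 1) * v$i0 + sinh s * v$iL) *\<^sub>R axis i0 1
                     + (sinh s * v$i0 + (cosh s - 1) * v$iL) *\<^sub>R axis iL 1)
                  has_vector_derivative v$iL *\<^sub>R axis i0 1 + v$i0 *\<^sub>R axis iL 1) (at 0)"
    by (rule derivative_eq_intros | simp)+
  ultimately show ?thesis
    by simp
qed

lemma posAdS_eq:
  fixes i0 iL :: "'n::finite"
  assumes "i0 \<noteq> iL"
  shows "posAdS i0 iL = {x \<in> AdS i0. \<bar>snd x$i0\<bar> < \<bar>snd x$iL\<bar> \<and> 0 < fst x * snd x$iL}"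
proof -
  have "x \<in> posAdS i0 iL \<longleftrightarrow> \<bar>v$i0\<bar> < \<bar>v$iL\<bar> \<and> 0 < t * v$iL"
    if x: "x \<in> AdS i0" and xe: "x = (t, v)" for x t v
  proof -
    define w :: "real \<times> (real^'n)" where "w = (0, v$iL *\<^sub>R axis i0 1 + v$i0 *\<^sub>R axis iL 1)"
    have "((\<lambda>s. flowAdS i0 iL s x) has_vector_derivative w) (at 0)"
      using flowAdS_eq_boost[OF assms x] boost_has_vector_derivative[OF assms]
      unfolding w_def xe by (auto intro!: derivative_intros)
    then have "x \<in> posAdS i0 iL \<longleftrightarrow> w \<in> ads_cone_int i0 x"
      unfolding posAdS_def using x vector_derivative_unique_at by blast
    moreover have "bA i0 x w = 0" and "bA i0 w w = (v$iL)\<^sup>2 - (v$i0)\<^sup>2"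
      and "bA i0 w (Jvec i0 x) = t * v$iL"
      using assms by (auto simp: w_def xe bA_def Jvec_def mbeta_split[OF assms] axis_def
                            power2_eq_square intro!: sum.neutral)
    ultimately show ?thesis
      using abs_le_square_iff[of "v$iL" "v$i0"]
      by (auto simp: ads_cone_int_def tanAdS_def not_le)
  qed
  then show ?thesis
    unfolding posAdS_def by fastforce
qed

lemma posV_eq:
  fixes i0 iL :: "'n::finite"
  assumes "i0 \<noteq> iL"
  shows "posV i0 iL = {v. \<bar>v$i0\<bar> < v$iL}"
proof -
  have "v \<in> posV i0 iL \<longleftrightarrow> \<bar>v$i0\<bar> < v$iL" for v
  proof -
    define w :: "real^'n" where "w = v$iL *\<^sub>R axis i0 1 + v$i0 *\<^sub>R axis iL 1"
    have "((\<lambda>s. flowV i0 iL s v) has_vector_derivative w) (at 0)"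
      using boost_has_vector_derivative[OF assms] by (simp add: flowV_eq_boost[OF assms] w_def)
    then have "v \<in> posV i0 iL \<longleftrightarrow> w \<in> Vplus i0"
      unfolding posV_def using vector_derivative_unique_at by blast
    moreover have "UNIV - {i0} = insert iL (UNIV - {i0, iL})"
      using assms by auto
    moreover have "(\<Sum>j\<in>UNIV - {i0, iL}. (w$j)\<^sup>2) = 0"
      by (auto simp: w_def axis_def intro!: sum.neutral)
    ultimately show ?thesis
      using assms by (simp add: Vplus_def w_def axis_def)
  qed
  then show ?thesis
    by auto
qed

(* The point of AdS^d representing eta(v): eta_rep v = ((1 + beta(v,v)) / 2) * ads_emb (eta_AdS v).
   For beta(v,v) = -1 the point eta(v) lies outside AdS^d and the value is junk (division by 0). *)
definition eta_AdS :: "'n::finite \<Rightarrow> real^'n \<Rightarrow> real \<times> (real^'n)" where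
  "eta_AdS i0 v = ((1 - mbeta i0 v v) / (1 + mbeta i0 v v), (2 / (1 + mbeta i0 v v)) *\<^sub>R v)"

lemma proj_eq_eta_rep_ads_emb_iff:
  "proj_eq (eta_rep i0 v) (ads_emb x) \<longleftrightarrow> mbeta i0 v v \<noteq> -1 \<and> x = eta_AdS i0 v"
proof -
  let ?b = "mbeta i0 v v"
  have nonzero: "eta_rep i0 v \<noteq> 0" "ads_emb x \<noteq> 0"
    by (auto simp: eta_rep_def ads_emb_def zero_prod_def)
  have "eta_rep i0 v = c *\<^sub>R ads_emb x \<longleftrightarrow> c = (1 + ?b) / 2 \<and> ?b \<noteq> -1 \<and> x = eta_AdS i0 v"
    if "c \<noteq> 0" for c
    using that by (cases x) (auto simp: eta_rep_def ads_emb_def eta_AdS_def field_simps)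
  then show ?thesis
    using nonzero unfolding proj_eq_def
    by (metis add_eq_0_iff divide_eq_0_iff zero_neq_numeral)
qed

lemma eta_AdS_mem_AdS:
  assumes "mbeta i0 v v \<noteq> -1"
  shows "eta_AdS i0 v \<in> AdS i0"
proof -
  let ?b = "mbeta i0 v v"
  have "1 + ?b \<noteq> 0"
    using assms by linarith
  have "((1 - ?b) / (1 + ?b))\<^sup>2 + (2 / (1 + ?b))\<^sup>2 * ?b = ((1 - ?b)\<^sup>2 + 4 * ?b) / (1 + ?b)\<^sup>2"
    by (simp add: power_divide add_divide_distrib)
  also have "(1 - ?b)\<^sup>2 + 4 * ?b = (1 + ?b)\<^sup>2"
    by (simp add: power2_eq_square algebra_simps)
  finally show ?thesis
    using \<open>1 + ?b \<noteq> 0\<close> by (simp add: AdS_def eta_AdS_def mbeta_scaleR power2_eq_square)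
qed

lemma eta_AdS_mem_posAdS_iff:
  fixes i0 iL :: "'n::finite"
  assumes "i0 \<noteq> iL" and "mbeta i0 v v \<noteq> -1"
  shows "eta_AdS i0 v \<in> posAdS i0 iL \<longleftrightarrow> \<bar>v$i0\<bar> < v$iL"
proof -
  let ?b = "mbeta i0 v v"
  have "1 + ?b \<noteq> 0"
    using assms by linarith
  have abs_iff: "\<bar>snd (eta_AdS i0 v) $ i0\<bar> < \<bar>snd (eta_AdS i0 v) $ iL\<bar> \<longleftrightarrow> \<bar>v$i0\<bar> < \<bar>v$iL\<bar>"
    using \<open>1 + ?b \<noteq> 0\<close> by (simp add: eta_AdS_def abs_mult divide_less_cancel)
  have product: "fst (eta_AdS i0 v) * snd (eta_AdS i0 v) $ iL = 2 / (1 + ?b)\<^sup>2 * ((1 - ?b) * v$iL)"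
    by (simp add: eta_AdS_def power2_eq_square)
  have "0 < 2 / (1 + ?b)\<^sup>2"
    using \<open>1 + ?b \<noteq> 0\<close> by simp
  then have sign_iff: "0 < fst (eta_AdS i0 v) * snd (eta_AdS i0 v) $ iL \<longleftrightarrow> 0 < (1 - ?b) * v$iL"
    unfolding product by (metis mult_pos_pos zero_less_mult_pos)
  have "0 < 1 - ?b" if "\<bar>v$i0\<bar> < \<bar>v$iL\<bar>"
    using mbeta_self_neg[OF assms(1) that] by linarith
  then show ?thesis
    using eta_AdS_mem_AdS[OF assms(2)] abs_iff sign_iff
    by (auto simp: posAdS_eq[OF assms(1)] zero_less_mult_iff)
qed

lemma eta_AdS_inverse:
  assumes "x \<in> AdS i0" and "fst x \<noteq> -1"
  defines "v \<equiv> (1 / (1 + fst x)) *\<^sub>R snd x"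
  shows "mbeta i0 v v \<noteq> -1" and "eta_AdS i0 v = x"
proof -
  obtain t u where x: "x = (t, u)" by (cases x)
  have "1 + t \<noteq> 0"
    using assms x by auto
  have "mbeta i0 u u = (1 - t) * (1 + t)"
    using assms(1) by (simp add: x AdS_def algebra_simps power2_eq_square)
  then have b: "mbeta i0 v v = (1 - t) / (1 + t)"
    using \<open>1 + t \<noteq> 0\<close> by (simp add: v_def x mbeta_scaleR power2_eq_square)
  moreover have "(1 - t) / (1 + t) \<noteq> -1"
    using \<open>1 + t \<noteq> 0\<close> by (simp add: field_simps)
  ultimately show "mbeta i0 v v \<noteq> -1"
    by simp
  from \<open>1 + t \<noteq> 0\<close> show "eta_AdS i0 v = x"
    unfolding eta_AdS_def b by (simp add: v_def x field_simps)
qed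

lemma posAdS_in_eta_image:
  fixes i0 iL :: "'n::finite"
  assumes "i0 \<noteq> iL" and "x \<in> posAdS i0 iL"
  shows "\<exists>v. proj_eq (eta_rep i0 v) (ads_emb x)"
proof -
  have x: "x \<in> AdS i0" and "\<bar>snd x$i0\<bar> < \<bar>snd x$iL\<bar>"
    using assms(2) by (auto simp: posAdS_eq[OF assms(1)])
  then have "1 < (fst x)\<^sup>2"
    using mbeta_self_neg[OF assms(1), of "snd x"] by (auto simp: AdS_def case_prod_beta)
  then have "fst x \<noteq> -1"
    by auto
  then show ?thesis
    using eta_AdS_inverse[OF x] proj_eq_eta_rep_ads_emb_iff by metis
qed

lemma eta_preimage_posAdS:
  fixes i0 iL :: "'n::finite"
  assumes "i0 \<noteq> iL"
  shows "{v. \<exists>x\<in>posAdS i0 iL. proj_eq (eta_rep i0 v) (ads_emb x)}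
           = posV i0 iL - {v. mbeta i0 v v = -1}"
  using eta_AdS_mem_posAdS_iff[OF assms]
  by (auto simp: proj_eq_eta_rep_ads_emb_iff posV_eq[OF assms])

lemma connected_constant_sign:
  fixes f :: "'a::topological_space \<Rightarrow> real"
  assumes "connected C" and "continuous_on C f" and "\<And>x. x \<in> C \<Longrightarrow> f x \<noteq> 0"
  shows "(\<forall>x\<in>C. 0 < f x) \<or> (\<forall>x\<in>C. f x < 0)"
proof (rule ccontr)
  assume "\<not> ?thesis"
  then obtain a b where "a \<in> C" "b \<in> C" "f a < 0" "0 < f b"
    using assms(3) by (meson linorder_neqE_linordered_idom)
  moreover have "connected (f ` C)"
    using assms(1,2) by (rule connected_continuous_image[rotated])
  ultimately have "0 \<in> f ` C"
    by (auto simp: connected_iff_interval intro: less_imp_le)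
  then show False
    using assms(3) by auto
qed

lemma components_eq_sign_split:
  fixes f :: "'a::topological_space \<Rightarrow> real"
  assumes f: "continuous_on S f" "\<And>x. x \<in> S \<Longrightarrow> f x \<noteq> 0"
    and conn: "connected {x \<in> S. 0 < f x}" "connected {x \<in> S. f x < 0}"
    and nonempty: "{x \<in> S. 0 < f x} \<noteq> {}" "{x \<in> S. f x < 0} \<noteq> {}"
  shows "components S = {{x \<in> S. 0 < f x}, {x \<in> S. f x < 0}}"
proof -
  let ?P = "{x \<in> S. 0 < f x}" and ?N = "{x \<in> S. f x < 0}"
  have one_sign: "C \<subseteq> ?P \<or> C \<subseteq> ?N" if "connected C" "C \<subseteq> S" for C
    using connected_constant_sign[OF that(1) continuous_on_subset[OF f(1) that(2)]] that(2) f(2)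
    by blast
  have "C = ?P \<or> C = ?N" if "C \<in> components S" for C
  proof -
    have C: "C \<noteq> {}" "connected C" "C \<subseteq> S"
      using in_components_nonempty[OF that] in_components_connected[OF that] in_components_subset[OF that]
      by auto
    have "?P \<subseteq> C" if "C \<subseteq> ?P"
      using components_maximal[OF \<open>C \<in> components S\<close> conn(1)] C that by blast
    moreover have "?N \<subseteq> C" if "C \<subseteq> ?N"
      using components_maximal[OF \<open>C \<in> components S\<close> conn(2)] C that by blast
    ultimately show ?thesis
      using one_sign[OF C(2,3)] by blast
  qed
  moreover have "X \<in> components S" if X: "X = ?P \<or> X = ?N" for X
    unfolding in_components_maximal
  proof (intro conjI allI impI)
    fix D
    assume D: "D \<noteq> {} \<and> X \<subseteq> D \<and> D \<subseteq> S \<and> connected D"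
    have "?P \<inter> ?N = {}"
      by auto
    then show "D = X"
      using one_sign[of D] D X nonempty by blast
  qed (use X conn nonempty in auto)
  ultimately show ?thesis
    by blast
qed

lemma uminus_mem_posAdS:
  fixes i0 iL :: "'n::finite"
  assumes "i0 \<noteq> iL" and "x \<in> posAdS i0 iL"
  shows "- x \<in> posAdS i0 iL"
  using assms(2) mbeta_scaleR[of i0 "-1" "snd x" "-1" "snd x"]
  by (auto simp: posAdS_eq[OF assms(1)] AdS_def case_prod_beta)

lemma posAdS_fst_neg_eq_uminus:
  fixes i0 iL :: "'n::finite"
  assumes "i0 \<noteq> iL"
  shows "{x \<in> posAdS i0 iL. fst x < 0} = uminus ` {x \<in> posAdS i0 iL. 0 < fst x}"
proof (intro equalityI subsetI)
  fix x
  assume "x \<in> {x \<in> posAdS i0 iL. fst x < 0}"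
  then have "- x \<in> {x \<in> posAdS i0 iL. 0 < fst x}"
    using uminus_mem_posAdS[OF assms] by auto
  then show "x \<in> uminus ` {x \<in> posAdS i0 iL. 0 < fst x}"
    by (rule image_eqI[rotated]) simp
qed (use uminus_mem_posAdS[OF assms] in auto)

lemma posAdS_fst_pos_eq_graph:
  fixes i0 iL :: "'n::finite"
  assumes "i0 \<noteq> iL"
  shows "{x \<in> posAdS i0 iL. 0 < fst x} = (\<lambda>v. (sqrt (1 - mbeta i0 v v), v)) ` {v. \<bar>v$i0\<bar> < v$iL}"
proof (intro equalityI subsetI)
  fix x
  assume "x \<in> {x \<in> posAdS i0 iL. 0 < fst x}"
  then have "(fst x)\<^sup>2 = 1 - mbeta i0 (snd x) (snd x)" "0 < fst x" "\<bar>snd x$i0\<bar> < snd x$iL"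
    by (auto simp: posAdS_eq[OF assms] AdS_def case_prod_beta zero_less_mult_iff)
  then have "x = (sqrt (1 - mbeta i0 (snd x) (snd x)), snd x)"
    by (simp add: prod_eq_iff real_sqrt_unique)
  then show "x \<in> (\<lambda>v. (sqrt (1 - mbeta i0 v v), v)) ` {v. \<bar>v$i0\<bar> < v$iL}"
    using \<open>\<bar>snd x$i0\<bar> < snd x$iL\<close> by blast
next
  fix x
  assume "x \<in> (\<lambda>v. (sqrt (1 - mbeta i0 v v), v)) ` {v. \<bar>v$i0\<bar> < v$iL}"
  then obtain v where x: "x = (sqrt (1 - mbeta i0 v v), v)" and v: "\<bar>v$i0\<bar> < v$iL"
    by auto
  have "mbeta i0 v v < 0"
    using mbeta_self_neg[OF assms, of v] v by linarith
  with v show "x \<in> {x \<in> posAdS i0 iL. 0 < fst x}"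
    by (simp add: x posAdS_eq[OF assms] AdS_def)
qed

lemma convex_abs_component_less: "convex {v::real^'n. \<bar>v$i0\<bar> < v$iL}"
proof -
  have "{v::real^'n. \<bar>v$i0\<bar> < v$iL}
          = {v. 0 < (axis iL 1 - axis i0 1) \<bullet> v} \<inter> {v. 0 < (axis iL 1 + axis i0 1) \<bullet> v}"
    by (auto simp: inner_diff_left inner_add_left inner_axis')
  then show ?thesis
    by (simp add: convex_Int convex_halfspace_gt)
qed

lemma components_posAdS:
  fixes i0 iL :: "'n::finite"
  assumes "i0 \<noteq> iL"
  shows "components (posAdS i0 iL) = {{x \<in> posAdS i0 iL. 0 < fst x}, {x \<in> posAdS i0 iL. fst x < 0}}"
proof (rule components_eq_sign_split)
  show "connected {x \<in> posAdS i0 iL. 0 < fst x}"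
    unfolding posAdS_fst_pos_eq_graph[OF assms] mbeta_def
    by (intro connected_continuous_image convex_connected convex_abs_component_less continuous_intros)
  then show "connected {x \<in> posAdS i0 iL. fst x < 0}"
    unfolding posAdS_fst_neg_eq_uminus[OF assms] by (intro connected_continuous_image continuous_intros)
  have "axis iL 1 \<in> {v::real^'n. \<bar>v$i0\<bar> < v$iL}"
    using assms by (simp add: axis_def)
  then show "{x \<in> posAdS i0 iL. 0 < fst x} \<noteq> {}"
    unfolding posAdS_fst_pos_eq_graph[OF assms] by blast
  then show "{x \<in> posAdS i0 iL. fst x < 0} \<noteq> {}"
    unfolding posAdS_fst_neg_eq_uminus[OF assms] by blast
  show "continuous_on (posAdS i0 iL) fst"
    by (intro continuous_intros)
  show "fst x \<noteq> 0" if "x \<in> posAdS i0 iL" for x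
    using that by (auto simp: posAdS_eq[OF assms])
qed

lemma card_components_posAdS:
  fixes i0 iL :: "'n::finite"
  assumes "i0 \<noteq> iL"
  shows "card (components (posAdS i0 iL)) = 2"
proof -
  have "{x \<in> posAdS i0 iL. 0 < fst x} \<noteq> {x \<in> posAdS i0 iL. fst x < 0}"
    using components_posAdS[OF assms] in_components_nonempty by fastforce
  then show ?thesis
    unfolding components_posAdS[OF assms] by simp
qed

definition causal_diamond :: "'n::finite \<Rightarrow> (real \<times> (real^'n)) set \<Rightarrow> real \<times> (real^'n)
    \<Rightarrow> real \<times> (real^'n) \<Rightarrow> (real \<times> (real^'n)) set" where
  "causal_diamond i0 U a b = {\<gamma> t | \<gamma> t. causal_curve i0 U \<gamma> a b \<and> t \<in> {0..1}}"

lemma not_glob_hyp_if_unbounded_causal_diamond: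
  assumes "a \<in> U" and "b \<in> U" and "\<not> bounded (causal_diamond i0 U a b)"
  shows "\<not> glob_hyp i0 U"
proof
  assume "glob_hyp i0 U"
  then have "bounded (U \<inter> closure (causal_diamond i0 U a b))"
    using assms(1,2) by (auto simp: glob_hyp_def causal_diamond_def intro: compact_imp_bounded)
  moreover have "causal_diamond i0 U a b \<subseteq> U"
    by (auto simp: causal_diamond_def causal_curve_def)
  then have "causal_diamond i0 U a b \<subseteq> U \<inter> closure (causal_diamond i0 U a b)"
    using closure_subset by blast
  ultimately show False
    using assms(3) bounded_subset by blast
qed

lemma causal_curveI_C1:
  assumes deriv: "\<And>t. t \<in> {0..1} \<Longrightarrow> (\<gamma> has_vector_derivative \<gamma>' t) (at t)"
    and cont: "continuous_on {0..1} \<gamma>'"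
    and cone: "\<And>t. t \<in> {0..1} \<Longrightarrow> \<gamma>' t \<in> ads_cone i0 (\<gamma> t)"
    and "\<gamma> ` {0..1} \<subseteq> U" and "\<gamma> 0 = a" and "\<gamma> 1 = b"
  shows "causal_curve i0 U \<gamma> a b"
  unfolding causal_curve_def
proof (intro conjI ballI allI impI)
  show "\<gamma> piecewise_C1_differentiable_on {0..1}"
    using deriv cont
    by (intro C1_differentiable_imp_piecewise) (auto simp: C1_differentiable_on_def intro!: exI[of _ \<gamma>'])
  fix t w
  assume t: "t \<in> {0..1}" and w: "(\<gamma> has_vector_derivative w) (at t within {0..1})"
  have "w = \<gamma>' t"
    using has_vector_derivative_at_within[OF deriv[OF t]] w t
    by (intro vector_derivative_unique_within_closed_interval[of 0 1 t \<gamma> w "\<gamma>' t"]) auto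
  then show "w \<in> ads_cone i0 (\<gamma> t)"
    using cone[OF t] by simp
qed (use assms in auto)

lemma ads_cone_uminus:
  assumes "z \<in> ads_cone i0 x"
  shows "- z \<in> ads_cone i0 (- x)"
proof -
  have "bA i0 (- y) y' = - bA i0 y y'" "bA i0 y (- y') = - bA i0 y y'" for y y'
    using mbeta_scaleR[of i0 "-1" "snd y" 1 "snd y'"] mbeta_scaleR[of i0 1 "snd y" "-1" "snd y'"]
    by (simp_all add: bA_def)
  moreover have "Jvec i0 (- x) = - Jvec i0 x"
    by (auto simp: Jvec_def vec_eq_iff)
  ultimately show ?thesis
    using assms by (simp add: ads_cone_def tanAdS_def)
qed

lemma causal_curve_uminus:
  assumes "causal_curve i0 U \<gamma> a b"
  shows "causal_curve i0 (uminus ` U) (\<lambda>t. - \<gamma> t) (- a) (- b)"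
  unfolding causal_curve_def
proof (intro conjI ballI allI impI)
  show "(\<lambda>t. - \<gamma> t) piecewise_C1_differentiable_on {0..1}"
    using assms by (intro piecewise_C1_differentiable_neg) (simp add: causal_curve_def)
  fix t w
  assume t: "t \<in> {0..1}" and "((\<lambda>t. - \<gamma> t) has_vector_derivative w) (at t within {0..1})"
  then have "(\<gamma> has_vector_derivative - w) (at t within {0..1})"
    using has_vector_derivative_minus by fastforce
  then have "- w \<in> ads_cone i0 (\<gamma> t)"
    using assms t unfolding causal_curve_def by blast
  then show "w \<in> ads_cone i0 (- \<gamma> t)"
    using ads_cone_uminus by fastforce
next
  have "\<gamma> 0 = a" "\<gamma> 1 = b" "\<gamma> ` {0..1} \<subseteq> U"
    using assms by (simp_all add: causal_curve_def)
  then show "- \<gamma> 0 = - a" "- \<gamma> 1 = - b" "(\<lambda>t. - \<gamma> t) ` {0..1} \<subseteq> uminus ` U"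
    by auto
qed

lemma uminus_causal_diamond_subset:
  "uminus ` causal_diamond i0 U a b \<subseteq> causal_diamond i0 (uminus ` U) (- a) (- b)"
proof
  fix x
  assume "x \<in> uminus ` causal_diamond i0 U a b"
  then obtain \<gamma> t where \<gamma>: "causal_curve i0 U \<gamma> a b" and "t \<in> {0..1}" "x = - \<gamma> t"
    by (auto simp: causal_diamond_def)
  moreover have "causal_curve i0 (uminus ` U) (\<lambda>t. - \<gamma> t) (- a) (- b)"
    using \<gamma> by (rule causal_curve_uminus)
  ultimately show "x \<in> causal_diamond i0 (uminus ` U) (- a) (- b)"
    unfolding causal_diamond_def by (intro CollectI exI[of _ "\<lambda>t. - \<gamma> t"] exI[of _ t]) simp
qed

(* Conformal coordinates on the AdS^2 slice: theta is the time angle and delta > 0 the distance to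
   the conformal boundary delta = 0. The induced metric is (d theta^2 - d delta^2) / sin^2 delta, so
   ads_point_velocity, the velocity of a curve with derivatives (theta', delta'), is causal and future
   directed iff |delta'| <= theta'. *)
definition ads_point :: "'n::finite \<Rightarrow> 'n \<Rightarrow> real \<Rightarrow> real \<Rightarrow> real \<times> (real^'n)" where
  "ads_point i0 iL \<theta> \<delta> =
     (cos \<theta> / sin \<delta>, (sin \<theta> / sin \<delta>) *\<^sub>R axis i0 1 + (cos \<delta> / sin \<delta>) *\<^sub>R axis iL 1)"

definition ads_point_velocity ::
    "'n::finite \<Rightarrow> 'n \<Rightarrow> real \<Rightarrow> real \<Rightarrow> real \<Rightarrow> real \<Rightarrow> real \<times> (real^'n)" where
  "ads_point_velocity i0 iL \<theta> \<delta> \<theta>' \<delta>' =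
     ((- sin \<theta> * sin \<delta> * \<theta>' - cos \<theta> * cos \<delta> * \<delta>') / (sin \<delta>)\<^sup>2,
      ((cos \<theta> * sin \<delta> * \<theta>' - sin \<theta> * cos \<delta> * \<delta>') / (sin \<delta>)\<^sup>2) *\<^sub>R axis i0 1
        + (- \<delta>' / (sin \<delta>)\<^sup>2) *\<^sub>R axis iL 1)"

lemma ads_point_mem_posAdS:
  fixes i0 iL :: "'n::finite"
  assumes "i0 \<noteq> iL" and "0 < \<delta>" and "\<bar>\<theta>\<bar> + \<delta> < pi / 2"
  shows "ads_point i0 iL \<theta> \<delta> \<in> {x \<in> posAdS i0 iL. 0 < fst x}"
proof -
  have "0 < sin \<delta>" "0 < cos \<delta>" "0 < cos \<theta>"
    using assms(2,3) pi_gt3 by (auto intro!: sin_gt_zero cos_gt_zero_pi)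
  have "sin x < cos \<delta>" if "\<bar>x\<bar> = \<bar>\<theta>\<bar>" for x
    unfolding cos_sin_eq using that assms(2,3) by (intro sin_monotone_2pi) auto
  from this[of \<theta>] this[of "- \<theta>"] have "\<bar>sin \<theta>\<bar> < cos \<delta>"
    by auto
  then have "\<bar>sin \<theta> / sin \<delta>\<bar> < \<bar>cos \<delta> / sin \<delta>\<bar>"
    using \<open>0 < sin \<delta>\<close> \<open>0 < cos \<delta>\<close> by (simp add: divide_strict_right_mono)
  moreover have "(cos \<theta> / sin \<delta>)\<^sup>2 + (sin \<theta> / sin \<delta> * (sin \<theta> / sin \<delta>) - cos \<delta> / sin \<delta> * (cos \<delta> / sin \<delta>)) = 1"
    using \<open>0 < sin \<delta>\<close> sin_cos_squared_add[of \<theta>] sin_cos_squared_add[of \<delta>]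
    by (simp add: field_simps power2_eq_square)
  moreover have "0 < cos \<theta> / sin \<delta> * (cos \<delta> / sin \<delta>)"
    using \<open>0 < sin \<delta>\<close> \<open>0 < cos \<delta>\<close> \<open>0 < cos \<theta>\<close> by simp
  ultimately show ?thesis
    unfolding ads_point_def posAdS_eq[OF assms(1)] AdS_def mem_Collect_eq split fst_conv snd_conv
      mbeta_axis_pair[OF assms(1)] axis_pair_nth[OF assms(1)]
    using \<open>0 < sin \<delta>\<close> \<open>0 < cos \<theta>\<close> by simp
qed

lemma ads_point_has_vector_derivative:
  assumes \<theta>: "(\<theta> has_real_derivative \<theta>') (at t)" and \<delta>: "(\<delta> has_real_derivative \<delta>') (at t)"
    and "sin (\<delta> t) \<noteq> 0"
  shows "((\<lambda>s. ads_point i0 iL (\<theta> s) (\<delta> s)) has_vector_derivative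
           ads_point_velocity i0 iL (\<theta> t) (\<delta> t) \<theta>' \<delta>') (at t)"
proof -
  have quotient: "((\<lambda>s. f (g s) / sin (\<delta> s)) has_real_derivative
            (f' (g t) * g' * sin (\<delta> t) - f (g t) * cos (\<delta> t) * \<delta>') / (sin (\<delta> t))\<^sup>2) (at t)"
    if f: "\<And>x. (f has_real_derivative f' x) (at x)" and g: "(g has_real_derivative g') (at t)" for f f' g g'
    using \<delta> g \<open>sin (\<delta> t) \<noteq> 0\<close>
    by (auto intro!: derivative_eq_intros DERIV_chain2[OF f] simp: power2_eq_square)
  have "(- sin (\<delta> t) * \<delta>' * sin (\<delta> t) - cos (\<delta> t) * cos (\<delta> t) * \<delta>') = - \<delta>'"
    using sin_cos_squared_add[of "\<delta> t"] by algebra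
  then have cot: "((\<lambda>s. cos (\<delta> s) / sin (\<delta> s)) has_real_derivative - \<delta>' / (sin (\<delta> t))\<^sup>2) (at t)"
    using quotient[OF DERIV_cos \<delta>] by simp
  have scaled: "((\<lambda>s. f s *\<^sub>R c) has_vector_derivative f' *\<^sub>R c) (at t)"
    if "(f has_real_derivative f') (at t)" for f f' and c :: "real^'n"
    using has_vector_derivative_scaleR[OF that has_vector_derivative_const[of c]] by simp
  show ?thesis
    unfolding ads_point_def ads_point_velocity_def
    using quotient[OF DERIV_cos \<theta>] quotient[OF DERIV_sin \<theta>] cot
    by (intro has_vector_derivative_Pair has_vector_derivative_add scaled)
       (auto intro: derivative_intros simp: has_real_derivative_iff_has_vector_derivative algebra_simps)
qed

lemma Jvec_axis_pair:
  fixes i0 iL :: "'n::finite"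
  assumes "i0 \<noteq> iL"
  shows "Jvec i0 (a, b *\<^sub>R axis i0 1 + c *\<^sub>R axis iL 1) = (- b, a *\<^sub>R axis i0 1 + 0 *\<^sub>R axis iL 1)"
  using assms by (auto simp: Jvec_def vec_eq_iff axis_def)

lemma ads_point_velocity_mem_ads_cone:
  fixes i0 iL :: "'n::finite"
  assumes "i0 \<noteq> iL" and "sin \<delta> \<noteq> 0" and "\<bar>\<delta>'\<bar> \<le> \<theta>'"
  shows "ads_point_velocity i0 iL \<theta> \<delta> \<theta>' \<delta>' \<in> ads_cone i0 (ads_point i0 iL \<theta> \<delta>)"
proof -
  let ?p = "ads_point i0 iL \<theta> \<delta>" and ?w = "ads_point_velocity i0 iL \<theta> \<delta> \<theta>' \<delta>'"
  have trig: "(sin \<theta>)\<^sup>2 + (cos \<theta>)\<^sup>2 = 1" "(sin \<delta>)\<^sup>2 + (cos \<delta>)\<^sup>2 = 1"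
    by simp_all
  have "bA i0 ?p ?w = 0"
    unfolding ads_point_def ads_point_velocity_def bA_def fst_conv snd_conv mbeta_axis_pair[OF assms(1)]
    using assms(2) by (simp add: field_simps power2_eq_square) (insert trig, algebra)
  moreover have "bA i0 ?w ?w = (\<theta>'\<^sup>2 - \<delta>'\<^sup>2) / (sin \<delta>)\<^sup>2"
    unfolding ads_point_velocity_def bA_def fst_conv snd_conv mbeta_axis_pair[OF assms(1)]
    using assms(2) by (simp add: field_simps power2_eq_square) (insert trig, algebra)
  moreover have "bA i0 ?w (Jvec i0 ?p) = \<theta>' / (sin \<delta>)\<^sup>2"
    unfolding ads_point_def ads_point_velocity_def Jvec_axis_pair[OF assms(1)]
    unfolding bA_def fst_conv snd_conv mbeta_axis_pair[OF assms(1)]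
    using assms(2) by (simp add: field_simps power2_eq_square) (insert trig, algebra)
  moreover have "\<delta>'\<^sup>2 \<le> \<theta>'\<^sup>2"
    using assms(3) abs_le_square_iff[of \<delta>' \<theta>'] by auto
  ultimately show ?thesis
    using assms(3) by (auto simp: ads_cone_def tanAdS_def)
qed

lemma ads_point_causal_curve:
  fixes i0 iL :: "'n::finite"
  assumes "i0 \<noteq> iL"
    and deriv: "\<And>t. t \<in> {0..1} \<Longrightarrow> (\<delta> has_real_derivative \<delta>' t) (at t)"
    and cont: "continuous_on {0..1} \<delta>'"
    and slope: "\<And>t. t \<in> {0..1} \<Longrightarrow> \<bar>\<delta>' t\<bar> \<le> 1"
    and range: "\<And>t. t \<in> {0..1} \<Longrightarrow> 0 < \<delta> t \<and> \<delta> t < 1"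
  shows "causal_curve i0 {x \<in> posAdS i0 iL. 0 < fst x} (\<lambda>t. ads_point i0 iL (t - 1/2) (\<delta> t))
           (ads_point i0 iL (-1/2) (\<delta> 0)) (ads_point i0 iL (1/2) (\<delta> 1))"
proof (rule causal_curveI_C1)
  have sin_pos: "0 < sin (\<delta> t)" if "t \<in> {0..1}" for t
    using range[OF that] pi_gt3 by (intro sin_gt_zero) auto
  show "((\<lambda>t. ads_point i0 iL (t - 1/2) (\<delta> t)) has_vector_derivative
          ads_point_velocity i0 iL (t - 1/2) (\<delta> t) 1 (\<delta>' t)) (at t)" if "t \<in> {0..1}" for t
    using sin_pos[OF that] deriv[OF that]
    by (intro ads_point_has_vector_derivative) (auto intro!: derivative_eq_intros)
  have "continuous_on {0..1} \<delta>"
    using deriv DERIV_isCont by (intro continuous_at_imp_continuous_on) blast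
  moreover have "\<forall>t\<in>{0..1}. (sin (\<delta> t))\<^sup>2 \<noteq> 0"
    using sin_pos by fastforce
  ultimately show "continuous_on {0..1} (\<lambda>t. ads_point_velocity i0 iL (t - 1/2) (\<delta> t) 1 (\<delta>' t))"
    unfolding ads_point_velocity_def using cont by (intro continuous_intros)
  show "ads_point_velocity i0 iL (t - 1/2) (\<delta> t) 1 (\<delta>' t) \<in> ads_cone i0 (ads_point i0 iL (t - 1/2) (\<delta> t))"
    if "t \<in> {0..1}" for t
    using sin_pos[OF that] slope[OF that] by (intro ads_point_velocity_mem_ads_cone[OF assms(1)]) auto
  have "\<bar>t - 1/2\<bar> + \<delta> t < pi / 2" if "t \<in> {0..1}" for t
    using range[OF that] that pi_gt3 by (auto simp: abs_if)
  then show "(\<lambda>t. ads_point i0 iL (t - 1/2) (\<delta> t)) ` {0..1} \<subseteq> {x \<in> posAdS i0 iL. 0 < fst x}"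
    using range by (intro image_subsetI ads_point_mem_posAdS[OF assms(1)]) auto
qed simp_all

lemma ads_point_unbounded:
  fixes i0 iL :: "'n::finite"
  assumes "i0 \<noteq> iL"
  shows "\<not> bounded ((\<lambda>\<delta>. ads_point i0 iL 0 \<delta>) ` {0<..1/4})"
proof
  assume "bounded ((\<lambda>\<delta>. ads_point i0 iL 0 \<delta>) ` {0<..1/4})"
  then obtain M where M: "\<And>\<delta>. \<delta> \<in> {0<..1/4} \<Longrightarrow> norm (ads_point i0 iL 0 \<delta>) \<le> M"
    unfolding bounded_iff by blast
  have "filterlim (\<lambda>\<delta>::real. cos \<delta> / sin \<delta>) at_top (at_right 0)"
    by real_asymp
  then have "\<forall>\<^sub>F \<delta> in at_right 0. M < cos \<delta> / sin \<delta>"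
    by (simp add: filterlim_at_top_dense)
  moreover have "\<forall>\<^sub>F \<delta> in at_right 0. \<delta> \<in> {0<..1/4::real}"
    by (auto simp: eventually_at_right_field intro!: exI[of _ "1/4"])
  ultimately have "\<forall>\<^sub>F \<delta> in at_right 0. M < cos \<delta> / sin \<delta> \<and> \<delta> \<in> {0<..1/4}"
    by (rule eventually_conj)
  then obtain \<delta> where "M < cos \<delta> / sin \<delta>" and \<delta>: "\<delta> \<in> {0<..1/4}"
    using eventually_happens'[OF trivial_limit_at_right_real] by blast
  moreover have "cos \<delta> / sin \<delta> \<le> norm (ads_point i0 iL 0 \<delta>)"
  proof -
    have "cos \<delta> / sin \<delta> = snd (ads_point i0 iL 0 \<delta>) $ iL"
      using assms by (simp add: ads_point_def axis_def)
    also have "\<dots> \<le> norm (snd (ads_point i0 iL 0 \<delta>))"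
      using component_le_norm_cart by (rule order_trans[OF abs_ge_self])
    also have "\<dots> \<le> norm (ads_point i0 iL 0 \<delta>)"
      by (metis norm_snd_le prod.collapse)
    finally show ?thesis .
  qed
  ultimately show False
    using M[OF \<delta>] by linarith
qed

lemma ads_point_mem_causal_diamond:
  fixes i0 iL :: "'n::finite"
  assumes "i0 \<noteq> iL" and "\<delta>\<^sub>0 \<in> {0<..1/4}"
  shows "ads_point i0 iL 0 \<delta>\<^sub>0 \<in> causal_diamond i0 {x \<in> posAdS i0 iL. 0 < fst x}
           (ads_point i0 iL (-1/2) (1/4)) (ads_point i0 iL (1/2) (1/4))"
proof -
  define \<delta> where "\<delta> t = \<delta>\<^sub>0 + (1/4 - \<delta>\<^sub>0) * (2 * t - 1)\<^sup>2" for t :: real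
  have "\<bar>2 * t - 1\<bar> \<le> 1" if "t \<in> {0..1}" for t :: real
    using that by (auto simp: abs_if)
  then have square: "(2 * t - 1)\<^sup>2 \<le> 1" and slope: "\<bar>(1 - 4 * \<delta>\<^sub>0) * (2 * t - 1)\<bar> \<le> 1"
    if "t \<in> {0..1}" for t
    using assms(2) that by (auto simp: abs_square_le_1 abs_mult intro!: mult_le_one)
  have range: "0 < \<delta> t \<and> \<delta> t < 1" if "t \<in> {0..1}" for t
  proof -
    have "0 \<le> (1/4 - \<delta>\<^sub>0) * (2 * t - 1)\<^sup>2" "(1/4 - \<delta>\<^sub>0) * (2 * t - 1)\<^sup>2 \<le> 1/4 - \<delta>\<^sub>0"
      using assms(2) square[OF that] by (auto intro: mult_left_le)
    then show ?thesis
      using assms(2) by (auto simp: \<delta>_def)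
  qed
  have deriv: "(\<delta> has_real_derivative (1 - 4 * \<delta>\<^sub>0) * (2 * t - 1)) (at t)" for t
    unfolding \<delta>_def[abs_def] by (auto intro!: derivative_eq_intros simp: field_simps)
  have "causal_curve i0 {x \<in> posAdS i0 iL. 0 < fst x} (\<lambda>t. ads_point i0 iL (t - 1/2) (\<delta> t))
      (ads_point i0 iL (-1/2) (\<delta> 0)) (ads_point i0 iL (1/2) (\<delta> 1))"
    using deriv slope range by (intro ads_point_causal_curve[OF assms(1)]) (auto intro!: continuous_intros)
  moreover have "\<delta> 0 = 1/4" "\<delta> 1 = 1/4" "ads_point i0 iL 0 \<delta>\<^sub>0 = ads_point i0 iL (1/2 - 1/2) (\<delta> (1/2))"
    by (simp_all add: \<delta>_def)
  ultimately show ?thesis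
    unfolding causal_diamond_def
    by (intro CollectI exI[of _ "\<lambda>t. ads_point i0 iL (t - 1/2) (\<delta> t)"] exI[of _ "1/2"] conjI) simp_all
qed

lemma posAdS_components_not_glob_hyp:
  fixes i0 iL :: "'n::finite"
  assumes "i0 \<noteq> iL"
  shows "\<not> glob_hyp i0 {x \<in> posAdS i0 iL. 0 < fst x}" and "\<not> glob_hyp i0 {x \<in> posAdS i0 iL. fst x < 0}"
proof -
  let ?U = "{x \<in> posAdS i0 iL. 0 < fst x}"
  let ?a = "ads_point i0 iL (-1/2) (1/4)" and ?b = "ads_point i0 iL (1/2) (1/4)"
  have "\<bar>-1/2::real\<bar> + 1/4 < pi / 2" "\<bar>1/2::real\<bar> + 1/4 < pi / 2"
    using pi_gt3 by simp_all
  then have ab: "?a \<in> ?U" "?b \<in> ?U"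
    by (simp_all only: ads_point_mem_posAdS[OF assms, of "1/4"] zero_less_divide_1_iff zero_less_numeral)
  have "(\<lambda>\<delta>. ads_point i0 iL 0 \<delta>) ` {0<..1/4} \<subseteq> causal_diamond i0 ?U ?a ?b"
    using ads_point_mem_causal_diamond[OF assms] by (rule image_subsetI)
  then have unbounded: "\<not> bounded (causal_diamond i0 ?U ?a ?b)"
    using ads_point_unbounded[OF assms] bounded_subset by auto
  then show "\<not> glob_hyp i0 ?U"
    using ab by (rule not_glob_hyp_if_unbounded_causal_diamond[rotated 2])
  have "\<not> bounded (uminus ` causal_diamond i0 ?U ?a ?b)"
    using unbounded by simp
  then have "\<not> bounded (causal_diamond i0 (uminus ` ?U) (- ?a) (- ?b))"
    using bounded_subset[OF _ uminus_causal_diamond_subset[of i0 ?U ?a ?b]] by blast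
  then show "\<not> glob_hyp i0 {x \<in> posAdS i0 iL. fst x < 0}"
    using ab unfolding posAdS_fst_neg_eq_uminus[OF assms]
    by (intro not_glob_hyp_if_unbounded_causal_diamond) auto
qed

theorem proposition7p6:
  fixes i0 iL :: "'n::finite"
  assumes "i0 \<noteq> iL"
  shows "(\<forall>x\<in>posAdS i0 iL. \<exists>v. proj_eq (eta_rep i0 v) (ads_emb x))
       \<and> {v. \<exists>x\<in>posAdS i0 iL. proj_eq (eta_rep i0 v) (ads_emb x)}
            = posV i0 iL - {v. mbeta i0 v v = -1}
       \<and> posV i0 iL = {v. v$iL > \<bar>v$i0\<bar>}
       \<and> card (components (posAdS i0 iL)) = 2
       \<and> (\<forall>C\<in>components (posAdS i0 iL). \<not> glob_hyp i0 C)"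
proof (intro conjI ballI)
  show "\<exists>v. proj_eq (eta_rep i0 v) (ads_emb x)" if "x \<in> posAdS i0 iL" for x
    using posAdS_in_eta_image[OF assms that] .
  show "\<not> glob_hyp i0 C" if "C \<in> components (posAdS i0 iL)" for C
    using that posAdS_components_not_glob_hyp[OF assms] by (auto simp: components_posAdS[OF assms])
qed (simp_all add: eta_preimage_posAdS[OF assms] posV_eq[OF assms] card_components_posAdS[OF assms])

end
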